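(* Let $K$ and $K'$ be oriented virtual knot diagrams related by a finite sequence of classical Reidemeister II and III moves and virtual Reidemeister moves (including the mixed move), i.e. all classical and virtual Reidemeister moves except the classical Reidemeister I move. Then $\gamma(K)=\gamma(K')$ and $\bar\gamma(K)=\bar\gamma(K')$.
   Context: A virtual knot diagram is an immersion of one circle in the plane with classical crossings (over/under information) and virtual crossings; virtual knots are equivalence classes under classical and virtual Reidemeister moves. Fix an orientation. Each classical crossing $c$ has a sign $sgn(c)\in\{\pm1\}$ (the usual right-hand rule sign). For a classical crossing $c$ of $K$, let $K_c$ be the two-component oriented virtual link diagram obtained by smoothing $c$ in the orientation-respecting way (the "vertical smoothing"), with inherited orientation. Let $L(K_c)$ be the sum of the signs of all classical crossings of $K_c$ at which the two strands belong to different components (no division by two), and $\bar L(K_c)=L(K_c) \bmod 2\in\{0,1\}$. Define $\gamma(K)=\sum_{c} t^{\bar L(K_c)}\,sgn(c)$, the sum over all classical crossings of $K$; this is an element $a+bt$ of the free $\mathbb{Z}$-module on $\{1,t\}$. Define $\bar\gamma(K)=\gamma(K) \bmod 2$, i.e. $\gamma(K)$ with coefficients reduced modulo $2$. *)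

theory Defs
  imports "HOL-Computational_Algebra.Polynomial"
begin

text \<open>Virtual knot diagrams up to virtual Reidemeister moves (including the mixed move)
are encoded by their signed Gauss diagrams: a cyclic Gauss word whose letters are
(crossing label, True = over-passage / False = under-passage), together with a sign
function on crossing labels.  The word is read along the fixed orientation; its
starting point is irrelevant (rotation is one of the generating moves below).\<close>

type_synonym gword = "(nat \<times> bool) list"
type_synonym gdiag = "gword \<times> (nat \<Rightarrow> int)"

definition labels :: "gword \<Rightarrow> nat set" where
  "labels w = fst ` set w"

definition wf_gdiag :: "gdiag \<Rightarrow> bool" where
  "wf_gdiag K \<longleftrightarrow> (\<forall>l \<in> labels (fst K).
      length (filter (\<lambda>x. x = (l, True)) (fst K)) = 1 \<and>
      length (filter (\<lambda>x. x = (l, False)) (fst K)) = 1 \<and>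
      snd K l \<in> {1, -1})"

text \<open>Vertical (oriented) smoothing at crossing c: the two components of K_c are the
two arcs of the Gauss circle between the two passages through c.\<close>

definition cpos :: "gword \<Rightarrow> nat \<Rightarrow> nat set" where
  "cpos w c = {k. k < length w \<and> fst (w ! k) = c}"

definition smooth_comp1 :: "gword \<Rightarrow> nat \<Rightarrow> gword" where
  "smooth_comp1 w c = take (Max (cpos w c) - Min (cpos w c) - 1) (drop (Min (cpos w c) + 1) w)"

definition smooth_comp2 :: "gword \<Rightarrow> nat \<Rightarrow> gword" where
  "smooth_comp2 w c = drop (Max (cpos w c) + 1) w @ take (Min (cpos w c)) w"

text \<open>L(K_c): sum of signs of the crossings of K_c between the two components
(no division by two).\<close>

definition Lk :: "gdiag \<Rightarrow> nat \<Rightarrow> int" where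
  "Lk K c = (\<Sum>d \<in> labels (smooth_comp1 (fst K) c) \<inter> labels (smooth_comp2 (fst K) c). snd K d)"

definition Lbar :: "gdiag \<Rightarrow> nat \<Rightarrow> nat" where
  "Lbar K c = nat (Lk K c mod 2)"

definition gamma :: "gdiag \<Rightarrow> int poly" where
  "gamma K = (\<Sum>c \<in> labels (fst K). monom (snd K c) (Lbar K c))"

definition gammabar :: "gdiag \<Rightarrow> int poly" where
  "gammabar K = map_poly (\<lambda>x. x mod 2) (gamma K)"

definition rotate_move :: "gdiag \<Rightarrow> gdiag \<Rightarrow> bool" where
  "rotate_move K K' \<longleftrightarrow> (\<exists>u v. fst K = u @ v \<and> fst K' = v @ u \<and> snd K' = snd K)"

text \<open>Renaming crossings (the Gauss diagram is the same; includes changing the sign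
function away from the actual crossings).\<close>
definition relabel_move :: "gdiag \<Rightarrow> gdiag \<Rightarrow> bool" where
  "relabel_move K K' \<longleftrightarrow> (\<exists>f. inj_on f (labels (fst K)) \<and>
      fst K' = map (\<lambda>(l, ov). (f l, ov)) (fst K) \<and>
      (\<forall>l \<in> labels (fst K). snd K' (f l) = snd K l))"

text \<open>Classical Reidemeister II move creating two crossings x, y (of opposite signs)
where one strand passes over another one twice; the two strands may have equal or
opposite orientations.\<close>
definition R2_move :: "gdiag \<Rightarrow> gdiag \<Rightarrow> bool" where
  "R2_move K K' \<longleftrightarrow> (\<exists>p q r x y.
      x \<noteq> y \<and> x \<notin> labels (fst K) \<and> y \<notin> labels (fst K) \<and>
      fst K = p @ q @ r \<and>
      (fst K' = p @ [(x, True), (y, True)] @ q @ [(x, False), (y, False)] @ r \<or>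
       fst K' = p @ [(x, True), (y, True)] @ q @ [(y, False), (x, False)] @ r) \<and>
      (\<forall>l \<in> labels (fst K). snd K' l = snd K l) \<and>
      snd K' x \<in> {1, -1} \<and> snd K' y = - snd K' x)"

text \<open>The three strands are top (T), middle (M) and
bottom (B); crossing a is T over M, b is T over B, c is M over B.  A local configuration of three (straight, oriented) strands is
realizable in the plane iff there is lam in {1,-1} such that the passages along T are in
the order a,b iff lam * sgn c = 1, along M in the order a,c iff lam * sgn b = 1, and along
B in the order b,c iff lam * sgn a = 1; the move changes lam to -lam.\<close>
definition R3_config :: "(nat \<Rightarrow> int) \<Rightarrow> nat \<Rightarrow> nat \<Rightarrow> nat \<Rightarrow> gword \<Rightarrow> gword \<Rightarrow> gword \<Rightarrow> bool" where
  "R3_config s a b c PT PM PB \<longleftrightarrow>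
     (PT = [(a, True), (b, True)] \<or> PT = [(b, True), (a, True)]) \<and>
     (PM = [(a, False), (c, True)] \<or> PM = [(c, True), (a, False)]) \<and>
     (PB = [(b, False), (c, False)] \<or> PB = [(c, False), (b, False)]) \<and>
     (\<exists>lam \<in> {1, -1::int}.
        (PT = [(a, True), (b, True)] \<longleftrightarrow> lam * s c = 1) \<and>
        (PM = [(a, False), (c, True)] \<longleftrightarrow> lam * s b = 1) \<and>
        (PB = [(b, False), (c, False)] \<longleftrightarrow> lam * s a = 1))"

definition R3_move :: "gdiag \<Rightarrow> gdiag \<Rightarrow> bool" where
  "R3_move K K' \<longleftrightarrow> (\<exists>a b c PT PM PB p1 p2 p3 p4.
      a \<noteq> b \<and> a \<noteq> c \<and> b \<noteq> c \<and> R3_config (snd K) a b c PT PM PB \<and> snd K' = snd K \<and>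
      ((fst K = p1 @ PT @ p2 @ PM @ p3 @ PB @ p4 \<and>
        fst K' = p1 @ rev PT @ p2 @ rev PM @ p3 @ rev PB @ p4) \<or>
       (fst K = p1 @ PT @ p2 @ PB @ p3 @ PM @ p4 \<and>
        fst K' = p1 @ rev PT @ p2 @ rev PB @ p3 @ rev PM @ p4)))"

text \<open>One move (in either direction): virtual moves (which do not change the Gauss
diagram), classical R2 and R3; classical R1 is excluded.\<close>
definition no_R1_step :: "gdiag \<Rightarrow> gdiag \<Rightarrow> bool" where
  "no_R1_step K K' \<longleftrightarrow> rotate_move K K' \<or> relabel_move K K' \<or>
     R2_move K K' \<or> R2_move K' K \<or> R3_move K K' \<or> R3_move K' K"

end

theory Submission
  imports Defs
begin

text \<open>If the two passages through a crossing c sit at positions i < j of the Gauss word, one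
component of K_c consists of the j - i - 1 letters strictly between them.  A crossing of that
component with itself contributes two of these letters and a crossing between the two components
exactly one, so L(K_c) \<equiv> j - i - 1 \<equiv> i + j + 1 (mod 2): gamma only depends on the signs and on
the parities of the position sums i + j.  These parities survive every move except R1.  Rotating
the word shifts them by even amounts because the word has even length; an R3 move reverses three
adjacent pairs of letters, which meet every crossing an even number of times in total; an R2 move
shifts the old position sums by even amounts and creates two crossings of opposite signs whose
position sums have equal parity, so their contributions cancel.\<close>

definition label_count :: "gword \<Rightarrow> nat \<Rightarrow> nat" where
  "label_count w c = length (filter (\<lambda>x. fst x = c) w)"

lemma label_count_Nil [simp]: "label_count [] c = 0"
  by (simp add: label_count_def)

lemma label_count_Cons [simp]:
  "label_count (x # xs) c = (if fst x = c then Suc (label_count xs c) else label_count xs c)"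
  by (simp add: label_count_def)

lemma label_count_append [simp]: "label_count (xs @ ys) c = label_count xs c + label_count ys c"
  by (simp add: label_count_def)

lemma label_count_eq_0_iff: "label_count w c = 0 \<longleftrightarrow> c \<notin> labels w"
  by (induction w) (auto simp: labels_def)

lemma labels_Nil [simp]: "labels [] = {}"
  by (simp add: labels_def)

lemma labels_Cons [simp]: "labels (x # xs) = insert (fst x) (labels xs)"
  by (simp add: labels_def)

lemma labels_append [simp]: "labels (xs @ ys) = labels xs \<union> labels ys"
  by (simp add: labels_def image_Un)

lemma labels_rev [simp]: "labels (rev xs) = labels xs"
  by (simp add: labels_def)

lemma finite_labels [simp]: "finite (labels w)"
  by (simp add: labels_def)

lemma length_eq_sum_label_count: "length w = (\<Sum>d\<in>labels w. label_count w d)"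
proof (induction w)
  case Nil
  then show ?case by simp
next
  case (Cons x w)
  have "(\<Sum>d\<in>labels (x # w). label_count (x # w) d)
      = (\<Sum>d\<in>insert (fst x) (labels w). label_count w d + (if d = fst x then 1 else 0))"
    by (intro sum.cong) auto
  also have "\<dots> = length w + 1"
    using Cons.IH by (cases "fst x \<in> labels w")
      (simp_all add: sum.distrib insert_absorb label_count_eq_0_iff)
  finally show ?case by simp
qed

lemma label_count_eq_2:
  assumes "wf_gdiag K" "c \<in> labels (fst K)"
  shows "label_count (fst K) c = 2"
proof -
  have "label_count w c = length (filter (\<lambda>x. x = (c, True)) w)
      + length (filter (\<lambda>x. x = (c, False)) w)" for w
    by (induction w) auto
  then show ?thesis
    using assms unfolding wf_gdiag_def by auto
qed

lemma even_length_gauss_word: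
  assumes "wf_gdiag K"
  shows "even (length (fst K))"
proof -
  have "length (fst K) = (\<Sum>d\<in>labels (fst K). 2)"
    using label_count_eq_2[OF assms]
    by (simp add: length_eq_sum_label_count[of "fst K"] cong: sum.cong)
  then show ?thesis by simp
qed

text \<open>The sum of the (0-based) positions at which the label c occurs in w.\<close>

fun index_sum :: "gword \<Rightarrow> nat \<Rightarrow> nat" where
  "index_sum [] c = 0"
| "index_sum (x # xs) c = index_sum xs c + label_count xs c"

lemma index_sum_append:
  "index_sum (xs @ ys) c = index_sum xs c + index_sum ys c + length xs * label_count ys c"
  by (induction xs) auto

lemma index_sum_eq_0: "c \<notin> labels w \<Longrightarrow> index_sum w c = 0"
  by (induction w) (auto simp: label_count_eq_0_iff)

lemma sum_plus_minus_one_mod_2: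
  assumes "finite S" "\<And>d. d \<in> S \<Longrightarrow> f d \<in> {1, -1::int}"
  shows "(\<Sum>d\<in>S. f d) mod 2 = int (card S) mod 2"
  using assms
proof (induction S rule: finite_induct)
  case empty
  then show ?case by simp
next
  case (insert x F)
  then have IH: "(\<Sum>d\<in>F. f d) mod 2 = int (card F) mod 2" and "f x = 1 \<or> f x = -1"
    by auto
  moreover have "(f x + (\<Sum>d\<in>F. f d)) mod 2 = (f x + int (card F)) mod 2"
    using IH by (metis mod_add_right_eq)
  ultimately show ?case
    using insert.hyps by auto presburger+
qed

lemma gauss_word_split_at_label:
  assumes "label_count w c = 2"
  obtains al x u y be where "w = al @ x # u @ y # be" "fst x = c" "fst y = c"
    "c \<notin> labels al" "c \<notin> labels u" "c \<notin> labels be"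
    "smooth_comp1 w c = u" "smooth_comp2 w c = be @ al"
proof -
  have "card (cpos w c) = 2"
    using assms by (simp add: label_count_def cpos_def length_filter_conv_card)
  then obtain i j where ij: "cpos w c = {i, j}" "i < j"
    by (metis card_2_iff insert_commute linorder_neqE_nat)
  then have ijw: "i < length w" "j < length w" "fst (w ! i) = c" "fst (w ! j) = c"
    by (auto simp: cpos_def)
  define al u be where "al = take i w" and "u = take (j - i - 1) (drop (Suc i) w)"
    and "be = drop (Suc j) w"
  have "drop (j - i - 1) (drop (Suc i) w) = w ! j # be"
    using ij ijw by (simp add: be_def Cons_nth_drop_Suc add.commute)
  then have "drop (Suc i) w = u @ w ! j # be"
    by (metis append_take_drop_id u_def)
  then have w: "w = al @ w ! i # u @ w ! j # be"
    using id_take_nth_drop[OF ijw(1)] by (simp add: al_def)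
  have "Min (cpos w c) = i" "Max (cpos w c) = j"
    using ij by auto
  then have "smooth_comp1 w c = u" "smooth_comp2 w c = be @ al"
    by (simp_all add: smooth_comp1_def smooth_comp2_def al_def u_def be_def)
  moreover have "label_count w c = label_count al c + label_count u c + label_count be c + 2"
    using ijw by (subst w) simp
  then have "c \<notin> labels al" "c \<notin> labels u" "c \<notin> labels be"
    using assms by (simp_all flip: label_count_eq_0_iff)
  ultimately show thesis
    using that w ijw by blast
qed

lemma even_length_plus_card_shared_labels:
  assumes "\<And>d. d \<in> labels u \<Longrightarrow> label_count u d + label_count v d = 2"
  shows "even (length u + card (labels u \<inter> labels v))"
proof -
  let ?S = "labels u \<inter> labels v"
  have "label_count u d = (if d \<in> ?S then 1 else 2)" if "d \<in> labels u" for d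
    using assms[OF that] that label_count_eq_0_iff[of u d] label_count_eq_0_iff[of v d] by auto
  then have "length u = (\<Sum>d\<in>labels u. if d \<in> ?S then 1 else 2)"
    by (simp add: length_eq_sum_label_count[of u] cong: sum.cong)
  also have "\<dots> = card ?S + 2 * card (labels u - ?S)"
  proof -
    have "labels u \<inter> ?S = ?S" "labels u \<inter> - ?S = labels u - ?S"
      by auto
    then show ?thesis
      by (simp only: sum.If_cases[OF finite_labels] Collect_mem_eq) simp
  qed
  finally show ?thesis by simp
qed

lemma Lbar_eq_index_sum_parity:
  assumes wf: "wf_gdiag K" and c: "c \<in> labels (fst K)"
  shows "Lbar K c = (index_sum (fst K) c + 1) mod 2"
proof -
  obtain al x u y be where split: "fst K = al @ x # u @ y # be" "fst x = c" "fst y = c"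
    "c \<notin> labels al" "c \<notin> labels u" "c \<notin> labels be"
    "smooth_comp1 (fst K) c = u" "smooth_comp2 (fst K) c = be @ al"
    using gauss_word_split_at_label[OF label_count_eq_2[OF assms]] .
  let ?S = "labels u \<inter> labels (be @ al)"
  have "index_sum (fst K) c = 2 * length al + length u + 1"
    using split by (simp add: index_sum_append index_sum_eq_0 label_count_eq_0_iff)
  moreover have "even (length u + card ?S)"
  proof (rule even_length_plus_card_shared_labels)
    fix d assume d: "d \<in> labels u"
    then have "label_count (fst K) d = label_count u d + label_count (be @ al) d"
      using split by auto
    moreover have "d \<in> labels (fst K)"
      using split d by auto
    ultimately show "label_count u d + label_count (be @ al) d = 2"
      using label_count_eq_2[OF wf] by auto
  qed
  moreover have "Lk K c mod 2 = int (card ?S) mod 2"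
    unfolding Lk_def split(7,8)
    by (rule sum_plus_minus_one_mod_2) (use wf split in \<open>auto simp: wf_gdiag_def\<close>)
  ultimately have "(index_sum (fst K) c + 1) mod 2 = card ?S mod 2"
    and "Lk K c mod 2 = int (card ?S mod 2)"
    by (presburger, simp add: of_nat_mod)
  then show ?thesis
    by (simp add: Lbar_def)
qed

definition crossing_term :: "gdiag \<Rightarrow> nat \<Rightarrow> int poly" where
  "crossing_term K c = monom (snd K c) ((index_sum (fst K) c + 1) mod 2)"

definition gauss_gamma :: "gdiag \<Rightarrow> int poly" where
  "gauss_gamma K = (\<Sum>c\<in>labels (fst K). crossing_term K c)"

lemma gamma_eq_gauss_gamma: "wf_gdiag K \<Longrightarrow> gamma K = gauss_gamma K"
  unfolding gamma_def gauss_gamma_def crossing_term_def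
  by (intro sum.cong) (auto simp: Lbar_eq_index_sum_parity)

lemma crossing_term_eqI:
  assumes "snd K' c = snd K c" and "even (index_sum (fst K') c + index_sum (fst K) c)"
  shows "crossing_term K' c = crossing_term K c"
proof -
  have "(index_sum (fst K') c + 1) mod 2 = (index_sum (fst K) c + 1) mod 2"
    using assms(2) by presburger
  then show ?thesis
    by (simp add: crossing_term_def assms(1))
qed

lemma gauss_gamma_eqI:
  assumes "labels (fst K') = labels (fst K)"
    and "\<And>c. c \<in> labels (fst K) \<Longrightarrow> snd K' c = snd K c"
    and "\<And>c. c \<in> labels (fst K) \<Longrightarrow> even (index_sum (fst K') c + index_sum (fst K) c)"
  shows "gauss_gamma K' = gauss_gamma K"
  unfolding gauss_gamma_def assms(1) by (intro sum.cong refl crossing_term_eqI assms)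

lemma even_index_sum_rotate:
  assumes "label_count u c + label_count v c = 2" and "even (length u + length v)"
  shows "even (index_sum (v @ u) c + index_sum (u @ v) c)"
proof -
  have "label_count u c = 0 \<and> label_count v c = 2 \<or> label_count u c = 1 \<and> label_count v c = 1
      \<or> label_count u c = 2 \<and> label_count v c = 0"
    using assms(1) by auto
  then show ?thesis
    using assms(2) by (elim disjE) (auto simp: index_sum_append)
qed

lemma wf_gdiag_rotate_move: "rotate_move K K' \<Longrightarrow> wf_gdiag K \<Longrightarrow> wf_gdiag K'"
  unfolding rotate_move_def wf_gdiag_def by (auto simp: add.commute Un_commute)

lemma gauss_gamma_rotate_move:
  assumes "rotate_move K K'" and wf: "wf_gdiag K"
  shows "gauss_gamma K' = gauss_gamma K"
proof -
  obtain u v where uv: "fst K = u @ v" "fst K' = v @ u" "snd K' = snd K"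
    using assms(1) unfolding rotate_move_def by auto
  show ?thesis
  proof (rule gauss_gamma_eqI)
    fix c assume "c \<in> labels (fst K)"
    then have "label_count u c + label_count v c = 2"
      using label_count_eq_2[OF wf] uv by auto
    moreover have "even (length u + length v)"
      using even_length_gauss_word[OF wf] uv by simp
    ultimately show "even (index_sum (fst K') c + index_sum (fst K) c)"
      unfolding uv by (rule even_index_sum_rotate)
  qed (use uv in auto)
qed

lemma length_filter_map_cong:
  "(\<And>x. x \<in> set w \<Longrightarrow> P (g x) \<longleftrightarrow> Q x) \<Longrightarrow> length (filter P (map g w)) = length (filter Q w)"
  by (simp add: filter_map cong: filter_cong)

lemma index_sum_map:
  assumes "\<And>x. x \<in> set w \<Longrightarrow> fst (g x) = d \<longleftrightarrow> fst x = c"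
  shows "index_sum (map g w) d = index_sum w c"
  using assms
proof (induction w)
  case (Cons x w)
  then have "label_count (map g w) d = label_count w c"
    unfolding label_count_def by (intro length_filter_map_cong) auto
  with Cons show ?case by simp
qed simp

lemma relabel_move_witness:
  assumes "relabel_move K K'"
  obtains f where "inj_on f (labels (fst K))"
    and "fst K' = map (\<lambda>(l, ov). (f l, ov)) (fst K)"
    and "labels (fst K') = f ` labels (fst K)"
    and "\<And>l. l \<in> labels (fst K) \<Longrightarrow> snd K' (f l) = snd K l"
    and "\<And>l x. l \<in> labels (fst K) \<Longrightarrow> x \<in> set (fst K) \<Longrightarrow> f (fst x) = f l \<longleftrightarrow> fst x = l"
proof -
  obtain f where f: "inj_on f (labels (fst K))" "fst K' = map (\<lambda>(l, ov). (f l, ov)) (fst K)"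
    "\<forall>l \<in> labels (fst K). snd K' (f l) = snd K l"
    using assms unfolding relabel_move_def by auto
  moreover have "labels (fst K') = f ` labels (fst K)"
    unfolding f(2) labels_def by (force simp: case_prod_beta)
  moreover have "f (fst x) = f l \<longleftrightarrow> fst x = l"
    if "l \<in> labels (fst K)" "x \<in> set (fst K)" for l x
    using f(1) that by (auto simp: labels_def dest: inj_onD)
  ultimately show thesis
    using that by blast
qed

lemma wf_gdiag_relabel_move:
  assumes "relabel_move K K'" and wf: "wf_gdiag K"
  shows "wf_gdiag K'"
proof -
  obtain f where f: "inj_on f (labels (fst K))" "fst K' = map (\<lambda>(l, ov). (f l, ov)) (fst K)"
    "labels (fst K') = f ` labels (fst K)" "\<And>l. l \<in> labels (fst K) \<Longrightarrow> snd K' (f l) = snd K l"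
    "\<And>l x. l \<in> labels (fst K) \<Longrightarrow> x \<in> set (fst K) \<Longrightarrow> f (fst x) = f l \<longleftrightarrow> fst x = l"
    using relabel_move_witness[OF assms(1)] by blast
  show ?thesis
    unfolding wf_gdiag_def f(3)
  proof
    fix l' assume "l' \<in> f ` labels (fst K)"
    then obtain l where l: "l \<in> labels (fst K)" "l' = f l"
      by blast
    have "length (filter (\<lambda>x. x = (l', b)) (fst K')) = length (filter (\<lambda>x. x = (l, b)) (fst K))" for b
      unfolding f(2) l(2) using f(5)[OF l(1)]
      by (intro length_filter_map_cong) (auto simp: case_prod_beta prod_eq_iff)
    then show "length (filter (\<lambda>x. x = (l', True)) (fst K')) = 1 \<and>
        length (filter (\<lambda>x. x = (l', False)) (fst K')) = 1 \<and> snd K' l' \<in> {1, - 1}"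
      using wf l f(4) unfolding wf_gdiag_def by auto
  qed
qed

lemma gauss_gamma_relabel_move:
  assumes "relabel_move K K'"
  shows "gauss_gamma K' = gauss_gamma K"
proof -
  obtain f where f: "inj_on f (labels (fst K))" "fst K' = map (\<lambda>(l, ov). (f l, ov)) (fst K)"
    "labels (fst K') = f ` labels (fst K)" "\<And>l. l \<in> labels (fst K) \<Longrightarrow> snd K' (f l) = snd K l"
    "\<And>l x. l \<in> labels (fst K) \<Longrightarrow> x \<in> set (fst K) \<Longrightarrow> f (fst x) = f l \<longleftrightarrow> fst x = l"
    using relabel_move_witness[OF assms] by blast
  have "gauss_gamma K' = (\<Sum>l\<in>labels (fst K). crossing_term K' (f l))"
    unfolding gauss_gamma_def f(3) using f(1) by (simp add: sum.reindex)
  also have "\<dots> = gauss_gamma K"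
    unfolding gauss_gamma_def
  proof (intro sum.cong refl)
    fix l assume l: "l \<in> labels (fst K)"
    have "index_sum (fst K') (f l) = index_sum (fst K) l"
      unfolding f(2) using f(5)[OF l] by (intro index_sum_map) (auto simp: case_prod_beta)
    then show "crossing_term K' (f l) = crossing_term K l"
      using f(4)[OF l] by (simp add: crossing_term_def)
  qed
  finally show ?thesis .
qed

lemma even_index_sum_swap:
  assumes "length A = 2"
  shows "even (index_sum (xs @ rev A @ ys) c + index_sum (xs @ A @ ys) c + label_count A c)"
proof -
  obtain a1 a2 where "A = [a1, a2]"
    using assms by (auto simp: length_Suc_conv numeral_2_eq_2)
  then show ?thesis
    by (auto simp: index_sum_append)
qed

lemma even_index_sum_reverse_three_pairs:
  assumes "length A = 2" "length B = 2" "length C = 2"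
    and "even (label_count A c + label_count B c + label_count C c)"
  shows "even (index_sum (p1 @ rev A @ p2 @ rev B @ p3 @ rev C @ p4) c
    + index_sum (p1 @ A @ p2 @ B @ p3 @ C @ p4) c)"
proof -
  have "even (index_sum (p1 @ rev A @ p2 @ rev B @ p3 @ rev C @ p4) c
      + index_sum (p1 @ A @ p2 @ rev B @ p3 @ rev C @ p4) c + label_count A c)"
    using even_index_sum_swap[OF assms(1), of p1 "p2 @ rev B @ p3 @ rev C @ p4"] by simp
  moreover have "even (index_sum (p1 @ A @ p2 @ rev B @ p3 @ rev C @ p4) c
      + index_sum (p1 @ A @ p2 @ B @ p3 @ rev C @ p4) c + label_count B c)"
    using even_index_sum_swap[OF assms(2), of "p1 @ A @ p2" "p3 @ rev C @ p4"] by simp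
  moreover have "even (index_sum (p1 @ A @ p2 @ B @ p3 @ rev C @ p4) c
      + index_sum (p1 @ A @ p2 @ B @ p3 @ C @ p4) c + label_count C c)"
    using even_index_sum_swap[OF assms(3), of "p1 @ A @ p2 @ B @ p3" p4] by simp
  ultimately show ?thesis
    using assms(4) by presburger
qed

lemma R3_config_pairs:
  assumes "R3_config s a b c PT PM PB"
  shows "length PT = 2" "length PM = 2" "length PB = 2"
    and "even (label_count PT z + label_count PM z + label_count PB z)"
proof -
  have "PT = [(a, True), (b, True)] \<or> PT = [(b, True), (a, True)]"
    "PM = [(a, False), (c, True)] \<or> PM = [(c, True), (a, False)]"
    "PB = [(b, False), (c, False)] \<or> PB = [(c, False), (b, False)]"
    using assms unfolding R3_config_def by blast+
  then show "length PT = 2" "length PM = 2" "length PB = 2"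
    and "even (label_count PT z + label_count PM z + label_count PB z)"
    by (elim disjE; simp)+
qed

lemma R3_move_reverses_pairs:
  assumes "R3_move K K'"
  obtains A B C p1 p2 p3 p4 where "length A = 2" "length B = 2" "length C = 2"
    and "\<And>z. even (label_count A z + label_count B z + label_count C z)"
    and "fst K = p1 @ A @ p2 @ B @ p3 @ C @ p4"
    and "fst K' = p1 @ rev A @ p2 @ rev B @ p3 @ rev C @ p4"
    and "snd K' = snd K"
proof -
  obtain a b c PT PM PB p1 p2 p3 p4 where config: "R3_config (snd K) a b c PT PM PB"
    and "snd K' = snd K"
    and "fst K = p1 @ PT @ p2 @ PM @ p3 @ PB @ p4 \<and>
        fst K' = p1 @ rev PT @ p2 @ rev PM @ p3 @ rev PB @ p4 \<or>
       fst K = p1 @ PT @ p2 @ PB @ p3 @ PM @ p4 \<and>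
        fst K' = p1 @ rev PT @ p2 @ rev PB @ p3 @ rev PM @ p4"
    using assms unfolding R3_move_def by blast
  moreover have "even (label_count PT z + label_count PB z + label_count PM z)" for z
    using R3_config_pairs(4)[OF config, of z] by (simp add: ac_simps)
  ultimately show thesis
    using that R3_config_pairs[OF config] by blast
qed

lemma wf_gdiag_R3_move_iff: "R3_move K K' \<Longrightarrow> wf_gdiag K' \<longleftrightarrow> wf_gdiag K"
  by (elim R3_move_reverses_pairs) (simp add: wf_gdiag_def flip: rev_filter)

lemma gauss_gamma_R3_move:
  assumes "R3_move K K'"
  shows "gauss_gamma K' = gauss_gamma K"
proof -
  obtain A B C p1 p2 p3 p4 where "length A = 2" "length B = 2" "length C = 2"
    and "\<And>z. even (label_count A z + label_count B z + label_count C z)"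
    and w: "fst K = p1 @ A @ p2 @ B @ p3 @ C @ p4"
    and w': "fst K' = p1 @ rev A @ p2 @ rev B @ p3 @ rev C @ p4"
    and "snd K' = snd K"
    using R3_move_reverses_pairs[OF assms] by blast
  show ?thesis
  proof (rule gauss_gamma_eqI)
    fix c
    show "even (index_sum (fst K') c + index_sum (fst K) c)"
      unfolding w w' by (rule even_index_sum_reverse_three_pairs) fact+
  qed (simp_all add: w w' \<open>snd K' = snd K\<close>)
qed

lemma filter_letter_not_in_labels: "l \<notin> labels w \<Longrightarrow> filter (\<lambda>z. z = (l, b)) w = []"
  by (induction w) auto

lemma R2_move_witness:
  assumes "R2_move K K'"
  obtains x y p q r M where "x \<noteq> y" "x \<notin> labels (fst K)" "y \<notin> labels (fst K)"
    and "fst K = p @ q @ r" "fst K' = p @ [(x, True), (y, True)] @ q @ M @ r"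
    and "M = [(x, False), (y, False)] \<or> M = [(y, False), (x, False)]"
    and "\<And>l. l \<in> labels (fst K) \<Longrightarrow> snd K' l = snd K l"
    and "snd K' x \<in> {1, -1}" "snd K' y = - snd K' x"
  using assms unfolding R2_move_def by blast

lemma wf_gdiag_R2_move_iff:
  assumes "R2_move K K'"
  shows "wf_gdiag K' \<longleftrightarrow> wf_gdiag K"
proof -
  obtain x y p q r M where xy: "x \<noteq> y" "x \<notin> labels (fst K)" "y \<notin> labels (fst K)"
    and w: "fst K = p @ q @ r" and w': "fst K' = p @ [(x, True), (y, True)] @ q @ M @ r"
    and M: "M = [(x, False), (y, False)] \<or> M = [(y, False), (x, False)]"
    and s: "\<And>l. l \<in> labels (fst K) \<Longrightarrow> snd K' l = snd K l"
    and sx: "snd K' x \<in> {1, -1}" and sy: "snd K' y = - snd K' x"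
    using R2_move_witness[OF assms] by metis
  have labels': "labels (fst K') = insert x (insert y (labels (fst K)))"
    using w w' M by auto
  have new: "length (filter (\<lambda>z. z = (l, b)) (fst K')) = 1" if "l = x \<or> l = y" for l b
  proof -
    have "l \<notin> labels p" "l \<notin> labels q" "l \<notin> labels r"
      using that xy unfolding w by auto
    then show ?thesis
      using M that xy(1) unfolding w' by (elim disjE) (simp_all add: filter_letter_not_in_labels)
  qed
  have old: "length (filter (\<lambda>z. z = (l, b)) (fst K')) = length (filter (\<lambda>z. z = (l, b)) (fst K))"
    if "l \<in> labels (fst K)" for l b
    using that xy M unfolding w w' by auto
  show ?thesis
    unfolding wf_gdiag_def labels' ball_simps using new old s sx sy by auto
qed

lemma gauss_gamma_R2_move:
  assumes "R2_move K K'"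
  shows "gauss_gamma K' = gauss_gamma K"
proof -
  obtain x y p q r M where xy: "x \<noteq> y" "x \<notin> labels (fst K)" "y \<notin> labels (fst K)"
    and w: "fst K = p @ q @ r" and w': "fst K' = p @ [(x, True), (y, True)] @ q @ M @ r"
    and M: "M = [(x, False), (y, False)] \<or> M = [(y, False), (x, False)]"
    and s: "\<And>l. l \<in> labels (fst K) \<Longrightarrow> snd K' l = snd K l"
    and sy: "snd K' y = - snd K' x"
    using R2_move_witness[OF assms] by metis
  have labels': "labels (fst K') = insert x (insert y (labels (fst K)))"
    using w w' M by auto
  have old: "crossing_term K' c = crossing_term K c" if c: "c \<in> labels (fst K)" for c
  proof (rule crossing_term_eqI)
    have "c \<noteq> x" "c \<noteq> y"
      using c xy by auto
    then have "index_sum (fst K') c = index_sum (fst K) c + 2 * (label_count q c + 2 * label_count r c)"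
      using M unfolding w w' by (elim disjE) (simp_all add: index_sum_append algebra_simps)
    then show "even (index_sum (fst K') c + index_sum (fst K) c)"
      by simp
  qed (use c s in simp)
  have "index_sum (fst K') x + index_sum (fst K') y = 2 * (2 * length p + length q + 3)"
    using M xy unfolding w w'
    by (elim disjE) (simp_all add: index_sum_append index_sum_eq_0 label_count_eq_0_iff[THEN iffD2])
  then have "(index_sum (fst K') x + 1) mod 2 = (index_sum (fst K') y + 1) mod 2"
    by presburger
  then have new: "crossing_term K' x + crossing_term K' y = 0"
    by (simp add: crossing_term_def sy add_monom)
  have "gauss_gamma K' = crossing_term K' x + crossing_term K' y
      + (\<Sum>c\<in>labels (fst K). crossing_term K' c)"
    unfolding gauss_gamma_def labels' using xy by (simp add: add.assoc)
  also have "(\<Sum>c\<in>labels (fst K). crossing_term K' c) = gauss_gamma K"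
    unfolding gauss_gamma_def using old by (rule sum.cong[OF refl])
  finally show ?thesis
    using new by simp
qed

lemma no_R1_step_invariant:
  assumes "no_R1_step K K'" and "wf_gdiag K"
  shows "wf_gdiag K' \<and> gauss_gamma K' = gauss_gamma K"
  using assms unfolding no_R1_step_def
  by (metis wf_gdiag_rotate_move gauss_gamma_rotate_move wf_gdiag_relabel_move
      gauss_gamma_relabel_move wf_gdiag_R2_move_iff gauss_gamma_R2_move
      wf_gdiag_R3_move_iff gauss_gamma_R3_move)

theorem mainTheorem1:
  fixes K K' :: gdiag
  assumes "wf_gdiag K"
    and "no_R1_step\<^sup>*\<^sup>* K K'"
  shows "gamma K = gamma K' \<and> gammabar K = gammabar K'"
proof -
  have "wf_gdiag K' \<and> gauss_gamma K' = gauss_gamma K"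
    using assms(2)
  proof (induction rule: rtranclp_induct)
    case base
    show ?case using assms(1) by simp
  next
    case step
    then show ?case using no_R1_step_invariant by metis
  qed
  then have "gamma K = gamma K'"
    using assms(1) by (simp add: gamma_eq_gauss_gamma)
  then show ?thesis
    by (simp add: gammabar_def)
qed

end
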